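(* Let $G$ be a compact connected Lie group with identity $e$. Let $N=(N(t))_{t\ge0}$ be a Poisson process with parameter $\lambda>0$, let $(X_n)_{n\ge1}$ be i.i.d. $G$-valued random variables, with the family $(X_n)_{n\ge1}$ independent of $N$, set $X_0=e$, and define the left compound Poisson process $Y(t)=\prod_{n=0}^{N(t)}X_n$ (product ordered from left to right). Then for every $t\ge0$: (1) if $X_1$ is inverse invariant then $Y(t)$ is inverse invariant; (2) if $X_1$ is conjugate invariant then $Y(t)$ is conjugate invariant.
   Context: A $G$-valued random variable $X$ is inverse invariant if $X\stackrel{d}{=}X^{-1}$, and conjugate invariant if $X\stackrel{d}{=}kXk^{-1}$ for all $k\in G$, where $\stackrel{d}{=}$ denotes equality in distribution. *)

theory Defs
  imports "HOL-Probability.Probability" "HOL-Algebra.Group"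
begin

definition borel_of :: "'a topology \<Rightarrow> 'a measure" where
  "borel_of T = sigma (topspace T) {U. openin T U}"

definition locally_euclidean :: "'a topology \<Rightarrow> bool" where
  "locally_euclidean T \<longleftrightarrow> (\<exists>d::nat. \<forall>x\<in>topspace T. \<exists>U V.
      openin T U \<and> x \<in> U \<and> openin (Euclidean_space d) V \<and>
      (subtopology T U) homeomorphic_space (subtopology (Euclidean_space d) V))"

definition topological_group :: "('g, 'b) monoid_scheme \<Rightarrow> 'g topology \<Rightarrow> bool" where
  "topological_group G T \<longleftrightarrow> group G \<and> topspace T = carrier G \<and> Hausdorff_space T \<and>
     continuous_map (prod_topology T T) T (\<lambda>p. fst p \<otimes>\<^bsub>G\<^esub> snd p) \<and>
     continuous_map T T (\<lambda>x. inv\<^bsub>G\<^esub> x)"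

text \<open>Compact connected Lie group, rendered as a compact connected locally Euclidean
  topological group (Gleason-Montgomery-Zippin: these are exactly the Lie groups).\<close>
definition compact_connected_lie_group :: "('g, 'b) monoid_scheme \<Rightarrow> 'g topology \<Rightarrow> bool" where
  "compact_connected_lie_group G T \<longleftrightarrow> topological_group G T \<and> locally_euclidean T \<and>
     compact_space T \<and> connected_space T"

definition poisson_process :: "'w measure \<Rightarrow> real \<Rightarrow> (real \<Rightarrow> 'w \<Rightarrow> nat) \<Rightarrow> bool" where
  "poisson_process M l N \<longleftrightarrow> prob_space M \<and>
     (\<forall>t\<ge>0. N t \<in> M \<rightarrow>\<^sub>M count_space UNIV) \<and>
     (AE \<omega> in M. N 0 \<omega> = 0) \<and>
     (\<forall>s t. 0 \<le> s \<and> s < t \<longrightarrow>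
        (AE \<omega> in M. N s \<omega> \<le> N t \<omega>) \<and>
        distr M (count_space UNIV) (\<lambda>\<omega>. N t \<omega> - N s \<omega>) = measure_pmf (poisson_pmf (l * (t - s)))) \<and>
     (\<forall>(ts::nat \<Rightarrow> real) (k::nat). 0 \<le> ts 0 \<and> (\<forall>i<k. ts i < ts (Suc i)) \<longrightarrow>
        prob_space.indep_vars M (\<lambda>_. count_space UNIV) (\<lambda>i \<omega>. N (ts (Suc i)) \<omega> - N (ts i) \<omega>) {..<k})"

definition inverse_invariant :: "('g, 'b) monoid_scheme \<Rightarrow> 'g measure \<Rightarrow> 'w measure \<Rightarrow> ('w \<Rightarrow> 'g) \<Rightarrow> bool" where
  "inverse_invariant G MG M Z \<longleftrightarrow> distr M MG Z = distr M MG (\<lambda>\<omega>. inv\<^bsub>G\<^esub> (Z \<omega>))"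

definition conjugate_invariant :: "('g, 'b) monoid_scheme \<Rightarrow> 'g measure \<Rightarrow> 'w measure \<Rightarrow> ('w \<Rightarrow> 'g) \<Rightarrow> bool" where
  "conjugate_invariant G MG M Z \<longleftrightarrow>
     (\<forall>k\<in>carrier G. distr M MG Z = distr M MG (\<lambda>\<omega>. k \<otimes>\<^bsub>G\<^esub> Z \<omega> \<otimes>\<^bsub>G\<^esub> inv\<^bsub>G\<^esub> k))"

definition left_prod :: "('g, 'b) monoid_scheme \<Rightarrow> (nat \<Rightarrow> 'w \<Rightarrow> 'g) \<Rightarrow> nat \<Rightarrow> 'w \<Rightarrow> 'g" where
  "left_prod G X n \<omega> = foldl (\<lambda>a i. a \<otimes>\<^bsub>G\<^esub> X i \<omega>) \<one>\<^bsub>G\<^esub> [0..<Suc n]"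

definition left_cpp :: "('g, 'b) monoid_scheme \<Rightarrow> (nat \<Rightarrow> 'w \<Rightarrow> 'g) \<Rightarrow> (real \<Rightarrow> 'w \<Rightarrow> nat) \<Rightarrow> real \<Rightarrow> 'w \<Rightarrow> 'g" where
  "left_cpp G X N t \<omega> = left_prod G X (N t \<omega>) \<omega>"

end

theory Submission
  imports Defs
begin

text \<open>Conditioned on \<open>N(t) = n\<close>, \<open>Y(t)\<close> is the product \<open>S\<^sub>n = X\<^sub>1 \<cdots> X\<^sub>n\<close> of i.i.d. factors that are
  independent of \<open>N(t)\<close>, so the law of \<open>Y(t)\<close> is a mixture of the laws of the \<open>S\<^sub>n\<close>, and it suffices
  to show \<open>S\<^sub>n = h(S\<^sub>n)\<close> in law, where \<open>h\<close> is the inversion or a conjugation. In both cases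
  \<open>h(S\<^sub>n) = h(X\<^bsub>\<sigma> 1\<^esub>) \<cdots> h(X\<^bsub>\<sigma> n\<^esub>)\<close> for a permutation \<open>\<sigma>\<close> (the reversal, resp. the identity),
  and since \<open>h\<close> preserves the common law of the \<open>X\<^sub>i\<close>, the vector \<open>(h(X\<^bsub>\<sigma> i\<^esub>))\<^sub>i\<close> has the same
  joint law as \<open>(X\<^sub>i)\<^sub>i\<close>.\<close>

(* Indices start at 1, whereas left_prod also multiplies in the factor with index 0. *)
primrec seq_prod :: "('g, 'b) monoid_scheme \<Rightarrow> (nat \<Rightarrow> 'g) \<Rightarrow> nat \<Rightarrow> 'g" where
  "seq_prod G x 0 = \<one>\<^bsub>G\<^esub>"
| "seq_prod G x (Suc n) = seq_prod G x n \<otimes>\<^bsub>G\<^esub> x (Suc n)"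

lemma seq_prod_cong:
  "(\<And>i. i \<in> {1..n} \<Longrightarrow> x i = y i) \<Longrightarrow> seq_prod G x n = seq_prod G y n"
  by (induction n) auto

lemma seq_prod_restrict [simp]:
  "{1..n} \<subseteq> I \<Longrightarrow> seq_prod G (restrict x I) n = seq_prod G x n"
  by (rule seq_prod_cong) auto

context group
begin

lemma seq_prod_closed [intro, simp]:
  "(\<And>i. i \<in> {1..n} \<Longrightarrow> x i \<in> carrier G) \<Longrightarrow> seq_prod G x n \<in> carrier G"
  by (induction n) auto

lemma seq_prod_Suc_left:
  "(\<And>i. i \<in> {1..Suc n} \<Longrightarrow> x i \<in> carrier G) \<Longrightarrow>
    seq_prod G x (Suc n) = x 1 \<otimes> seq_prod G (\<lambda>i. x (Suc i)) n"
proof (induction n)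
  case 0
  then show ?case by simp
next
  case (Suc n)
  have "seq_prod G (\<lambda>i. x (Suc i)) n \<in> carrier G"
    using Suc.prems by auto
  with Suc show ?case by (simp add: m_assoc)
qed

lemma inv_seq_prod:
  "(\<And>i. i \<in> {1..n} \<Longrightarrow> x i \<in> carrier G) \<Longrightarrow>
    inv (seq_prod G x n) = seq_prod G (\<lambda>i. inv (x (Suc n - i))) n"
proof (induction n)
  case 0
  then show ?case by simp
next
  case (Suc n)
  have "seq_prod G x n \<in> carrier G"
    using Suc.prems by auto
  with Suc have "inv (seq_prod G x (Suc n)) = inv (x (Suc n)) \<otimes> seq_prod G (\<lambda>i. inv (x (Suc n - i))) n"
    by (simp add: inv_mult_group)
  also have "\<dots> = seq_prod G (\<lambda>i. inv (x (Suc (Suc n) - i))) (Suc n)"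
  proof (subst seq_prod_Suc_left)
    show "inv (x (Suc (Suc n) - i)) \<in> carrier G" if "i \<in> {1..Suc n}" for i
      using that by (intro inv_closed Suc.prems) auto
  qed simp
  finally show ?case .
qed

lemma conj_seq_prod:
  "k \<in> carrier G \<Longrightarrow> (\<And>i. i \<in> {1..n} \<Longrightarrow> x i \<in> carrier G) \<Longrightarrow>
    k \<otimes> seq_prod G x n \<otimes> inv k = seq_prod G (\<lambda>i. k \<otimes> x i \<otimes> inv k) n"
proof (induction n)
  case 0
  then show ?case by simp
next
  case (Suc n)
  have "seq_prod G x n \<in> carrier G"
    using Suc.prems by auto
  with Suc.prems have "k \<otimes> seq_prod G x (Suc n) \<otimes> inv k
      = (k \<otimes> seq_prod G x n \<otimes> inv k) \<otimes> (k \<otimes> x (Suc n) \<otimes> inv k)"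
    by (simp add: m_assoc inv_solve_left)
  then show ?case using Suc by simp
qed

end

lemma left_prod_eq_seq_prod:
  assumes "group G" "X 0 \<omega> = \<one>\<^bsub>G\<^esub>"
  shows "left_prod G X n \<omega> = seq_prod G (\<lambda>i. X i \<omega>) n"
  using assms by (induction n) (simp_all add: left_prod_def group.is_monoid monoid.l_one)

lemma measurable_seq_prod:
  assumes mult: "(\<lambda>p. fst p \<otimes>\<^bsub>G\<^esub> snd p) \<in> MG \<Otimes>\<^sub>M MG \<rightarrow>\<^sub>M MG"
    and one: "\<one>\<^bsub>G\<^esub> \<in> space MG" and I: "{1..n} \<subseteq> I"
  shows "(\<lambda>x. seq_prod G x n) \<in> Pi\<^sub>M I (\<lambda>_. MG) \<rightarrow>\<^sub>M MG"
  using I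
proof (induction n)
  case 0
  then show ?case using one by simp
next
  case (Suc n)
  have "(\<lambda>x. (seq_prod G x n, x (Suc n))) \<in> Pi\<^sub>M I (\<lambda>_. MG) \<rightarrow>\<^sub>M MG \<Otimes>\<^sub>M MG"
    using Suc.prems by (intro measurable_Pair measurable_component_singleton Suc.IH) auto
  from measurable_compose [OF this mult] show ?case by simp
qed

lemma distr_PiM_compose_reindex:
  assumes \<mu>: "prob_space \<mu>" and I: "finite I" and \<sigma>: "bij_betw \<sigma> I I"
    and f: "f \<in> \<mu> \<rightarrow>\<^sub>M \<mu>" "distr \<mu> \<mu> f = \<mu>"
  shows "distr (Pi\<^sub>M I (\<lambda>_. \<mu>)) (Pi\<^sub>M I (\<lambda>_. \<mu>)) (\<lambda>x. \<lambda>i\<in>I. f (x (\<sigma> i))) = Pi\<^sub>M I (\<lambda>_. \<mu>)"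
proof -
  let ?P = "Pi\<^sub>M I (\<lambda>_. \<mu>)"
  have \<sigma>I: "inj_on \<sigma> I" "\<sigma> \<in> I \<rightarrow> I"
    using \<sigma> by (auto simp: bij_betw_def)
  have reindex: "(\<lambda>x. \<lambda>i\<in>I. x (\<sigma> i)) \<in> ?P \<rightarrow>\<^sub>M ?P"
    using \<sigma>I by (intro measurable_restrict measurable_component_singleton) auto
  have compose: "compose I f \<in> ?P \<rightarrow>\<^sub>M ?P"
    unfolding compose_def using f
    by (intro measurable_restrict measurable_compose [OF measurable_component_singleton]) auto
  have "distr ?P ?P (\<lambda>x. \<lambda>i\<in>I. f (x (\<sigma> i))) = distr ?P ?P (compose I f \<circ> (\<lambda>x. \<lambda>i\<in>I. x (\<sigma> i)))"
    by (rule distr_cong) (auto simp: compose_def fun_eq_iff \<sigma>I)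
  also have "\<dots> = distr (distr ?P ?P (\<lambda>x. \<lambda>i\<in>I. x (\<sigma> i))) ?P (compose I f)"
    by (rule distr_distr [OF compose reindex, symmetric])
  also have "distr ?P ?P (\<lambda>x. \<lambda>i\<in>I. x (\<sigma> i)) = ?P"
    using distr_PiM_reindex [of I "\<lambda>_. \<mu>" \<sigma> I] \<mu> \<sigma>I by simp
  also have "distr ?P ?P (compose I f) = Pi\<^sub>M I (\<lambda>_. distr \<mu> \<mu> f)"
    using distr_PiM_finite_prob_space' [of I "\<lambda>_. \<mu>" "\<lambda>_. \<mu>" f] \<mu> I f by simp
  finally show ?thesis
    using f by (simp add: restrict_def)
qed

lemma distr_eq_if_preserving:
  assumes V: "V \<in> M \<rightarrow>\<^sub>M N" and \<Phi>: "\<Phi> \<in> N \<rightarrow>\<^sub>M N"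
    and preserving: "distr (distr M N V) N \<Phi> = distr M N V"
    and F: "F \<in> N \<rightarrow>\<^sub>M L" and h: "h \<in> L \<rightarrow>\<^sub>M L"
    and intertwining: "\<And>x. x \<in> space N \<Longrightarrow> F (\<Phi> x) = h (F x)"
  shows "distr M L (F \<circ> V) = distr M L (h \<circ> F \<circ> V)"
proof -
  let ?\<nu> = "distr M N V"
  have \<Phi>': "\<Phi> \<in> ?\<nu> \<rightarrow>\<^sub>M N"
    using \<Phi> by simp
  have "distr M L (F \<circ> V) = distr ?\<nu> L F"
    by (rule distr_distr [OF F V, symmetric])
  also have "\<dots> = distr (distr ?\<nu> N \<Phi>) L F"
    by (simp only: preserving)
  also have "\<dots> = distr ?\<nu> L (F \<circ> \<Phi>)"
    by (rule distr_distr [OF F \<Phi>'])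
  also have "\<dots> = distr ?\<nu> L (h \<circ> F)"
    by (rule distr_cong) (simp_all add: intertwining)
  also have "\<dots> = distr M L (h \<circ> F \<circ> V)"
    by (rule distr_distr [OF measurable_comp [OF F h] V])
  finally show ?thesis .
qed

lemma (in prob_space) iid_distr_eq_transform:
  fixes X :: "'i \<Rightarrow> 'a \<Rightarrow> 'b"
  assumes I: "finite I" "I \<noteq> {}"
    and X: "\<And>i. i \<in> I \<Longrightarrow> X i \<in> M \<rightarrow>\<^sub>M MG" and indep: "indep_vars (\<lambda>_. MG) X I"
    and law: "\<And>i. i \<in> I \<Longrightarrow> distr M MG (X i) = \<mu>"
    and h: "h \<in> MG \<rightarrow>\<^sub>M MG" "distr \<mu> MG h = \<mu>" and \<sigma>: "bij_betw \<sigma> I I"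
    and F: "F \<in> Pi\<^sub>M I (\<lambda>_. MG) \<rightarrow>\<^sub>M MG"
    and intertwining: "\<And>x. x \<in> space (Pi\<^sub>M I (\<lambda>_. MG)) \<Longrightarrow> F (\<lambda>i\<in>I. h (x (\<sigma> i))) = h (F x)"
  shows "distr M MG (\<lambda>\<omega>. F (\<lambda>i\<in>I. X i \<omega>)) = distr M MG (\<lambda>\<omega>. h (F (\<lambda>i\<in>I. X i \<omega>)))"
proof -
  let ?P = "Pi\<^sub>M I (\<lambda>_. MG)"
  let ?V = "\<lambda>\<omega>. \<lambda>i\<in>I. X i \<omega>"
  let ?\<Phi> = "\<lambda>x. \<lambda>i\<in>I. h (x (\<sigma> i))"
  obtain j where j: "j \<in> I"
    using I by blast
  have sets_\<mu>: "sets \<mu> = sets MG"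
    using law [OF j] by auto
  have \<mu>: "prob_space \<mu>"
    using law [OF j] X [OF j] by (auto intro: prob_space_distr)
  have h\<mu>: "h \<in> \<mu> \<rightarrow>\<^sub>M \<mu>"
    using h(1) by (simp add: measurable_cong_sets [OF sets_\<mu> sets_\<mu>])
  have "distr \<mu> \<mu> h = distr \<mu> MG h"
    by (rule distr_cong) (simp_all add: sets_\<mu>)
  with h(2) have h\<mu>_preserving: "distr \<mu> \<mu> h = \<mu>"
    by simp
  have "distr M ?P ?V = Pi\<^sub>M I (\<lambda>i. distr M MG (X i))"
    using indep indep_vars_iff_distr_eq_PiM' [OF I(2) X] by simp
  also have "\<dots> = Pi\<^sub>M I (\<lambda>_. \<mu>)"
    by (rule PiM_cong) (simp_all add: law)
  finally have law_vector: "distr M ?P ?V = Pi\<^sub>M I (\<lambda>_. \<mu>)" .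
  have V: "?V \<in> M \<rightarrow>\<^sub>M ?P"
    using X by (rule measurable_restrict)
  have \<Phi>: "?\<Phi> \<in> ?P \<rightarrow>\<^sub>M ?P"
    using h \<sigma> by (intro measurable_restrict measurable_compose [OF measurable_component_singleton])
      (auto simp: bij_betw_def)
  have "distr (Pi\<^sub>M I (\<lambda>_. \<mu>)) ?P ?\<Phi> = distr (Pi\<^sub>M I (\<lambda>_. \<mu>)) (Pi\<^sub>M I (\<lambda>_. \<mu>)) ?\<Phi>"
    using sets_\<mu> by (intro distr_cong sets_PiM_cong) auto
  then have preserving: "distr (distr M ?P ?V) ?P ?\<Phi> = distr M ?P ?V"
    using distr_PiM_compose_reindex [OF \<mu> I(1) \<sigma> h\<mu> h\<mu>_preserving] by (simp add: law_vector)
  have "distr M MG (F \<circ> ?V) = distr M MG (h \<circ> F \<circ> ?V)"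
  proof (rule distr_eq_if_preserving [OF V \<Phi> preserving F h(1)])
    show "F (?\<Phi> x) = h (F x)" if "x \<in> space ?P" for x
      using that by (rule intertwining)
  qed
  then show ?thesis
    by (simp add: comp_def)
qed

lemma (in prob_space) seq_prod_distr_eq:
  assumes G: "group G" and space_MG: "space MG = carrier G"
    and mult: "(\<lambda>p. fst p \<otimes>\<^bsub>G\<^esub> snd p) \<in> MG \<Otimes>\<^sub>M MG \<rightarrow>\<^sub>M MG"
    and X: "\<And>i. i \<in> {1..n} \<Longrightarrow> X i \<in> M \<rightarrow>\<^sub>M MG" and indep: "indep_vars (\<lambda>_. MG) X {1..n}"
    and law: "\<And>i. i \<in> {1..n} \<Longrightarrow> distr M MG (X i) = \<mu>"
    and h: "h \<in> MG \<rightarrow>\<^sub>M MG" "distr \<mu> MG h = \<mu>" "h \<one>\<^bsub>G\<^esub> = \<one>\<^bsub>G\<^esub>"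
    and \<sigma>: "bij_betw \<sigma> {1..n} {1..n}"
    and intertwining: "\<And>x. (\<And>i. i \<in> {1..n} \<Longrightarrow> x i \<in> carrier G) \<Longrightarrow>
      h (seq_prod G x n) = seq_prod G (\<lambda>i. h (x (\<sigma> i))) n"
  shows "distr M MG (\<lambda>\<omega>. seq_prod G (\<lambda>i. X i \<omega>) n) = distr M MG (\<lambda>\<omega>. h (seq_prod G (\<lambda>i. X i \<omega>) n))"
proof (cases "n = 0")
  case True
  then show ?thesis
    using h(3) by simp
next
  case False
  have "distr M MG (\<lambda>\<omega>. seq_prod G (\<lambda>i\<in>{1..n}. X i \<omega>) n)
      = distr M MG (\<lambda>\<omega>. h (seq_prod G (\<lambda>i\<in>{1..n}. X i \<omega>) n))"
  proof (rule iid_distr_eq_transform [OF _ _ X indep law h(1,2) \<sigma>])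
    show "finite {1..n}" "{1..n} \<noteq> {}"
      using False by auto
    show "(\<lambda>x. seq_prod G x n) \<in> Pi\<^sub>M {1..n} (\<lambda>_. MG) \<rightarrow>\<^sub>M MG"
      using G space_MG by (intro measurable_seq_prod [OF mult]) (auto intro: monoid.one_closed group.is_monoid)
    fix x
    assume "x \<in> space (Pi\<^sub>M {1..n} (\<lambda>_. MG))"
    then have "x i \<in> carrier G" if "i \<in> {1..n}" for i
      using that space_MG by (auto simp: space_PiM)
    then have "h (seq_prod G x n) = seq_prod G (\<lambda>i. h (x (\<sigma> i))) n"
      by (rule intertwining)
    then show "seq_prod G (\<lambda>i\<in>{1..n}. h (x (\<sigma> i))) n = h (seq_prod G x n)"
      by simp
  qed
  then show ?thesis
    by simp
qed

lemma (in prob_space) emeasure_distr_random_index: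
  fixes K :: "'a \<Rightarrow> nat"
  assumes K: "K \<in> M \<rightarrow>\<^sub>M count_space UNIV" and V: "V \<in> M \<rightarrow>\<^sub>M PV"
    and F: "\<And>n. F n \<in> PV \<rightarrow>\<^sub>M L"
    and indep: "indep_set {V -` B \<inter> space M | B. B \<in> sets PV} E"
    and K_events: "\<And>n. {\<omega> \<in> space M. K \<omega> = n} \<in> E"
    and A: "A \<in> sets L"
  shows "emeasure (distr M L (\<lambda>\<omega>. F (K \<omega>) (V \<omega>))) A
    = (\<Sum>n. ennreal (prob {\<omega> \<in> space M. K \<omega> = n} * prob {\<omega> \<in> space M. F n (V \<omega>) \<in> A}))"
proof -
  have FV_sets: "{\<omega> \<in> space M. F n (V \<omega>) \<in> A} \<in> {V -` B \<inter> space M | B. B \<in> sets PV}" for n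
  proof -
    have "V -` (F n -` A \<inter> space PV) \<inter> space M = {\<omega> \<in> space M. F n (V \<omega>) \<in> A}"
      using measurable_space [OF V] by auto
    moreover have "F n -` A \<inter> space PV \<in> sets PV"
      using F A by (rule measurable_sets)
    ultimately show ?thesis
      by blast
  qed
  have FV_events: "{\<omega> \<in> space M. F n (V \<omega>) \<in> A} \<in> events" for n
    using indep_setD_ev1 [OF indep] FV_sets by blast
  have K_events': "{\<omega> \<in> space M. K \<omega> = n} \<in> events" for n
    using indep_setD_ev2 [OF indep] K_events by blast
  have FKV: "(\<lambda>\<omega>. F (K \<omega>) (V \<omega>)) \<in> M \<rightarrow>\<^sub>M L"
    by (rule measurable_compose_countable [OF _ K]) (rule measurable_compose [OF V F])
  have preimage: "(\<lambda>\<omega>. F (K \<omega>) (V \<omega>)) -` A \<inter> space M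
      = (\<Union>n. {\<omega> \<in> space M. F n (V \<omega>) \<in> A} \<inter> {\<omega> \<in> space M. K \<omega> = n})"
    by auto
  have "emeasure (distr M L (\<lambda>\<omega>. F (K \<omega>) (V \<omega>))) A
      = emeasure M (\<Union>n. {\<omega> \<in> space M. F n (V \<omega>) \<in> A} \<inter> {\<omega> \<in> space M. K \<omega> = n})"
    by (simp only: emeasure_distr [OF FKV A] preimage)
  also have "\<dots> = (\<Sum>n. emeasure M ({\<omega> \<in> space M. F n (V \<omega>) \<in> A} \<inter> {\<omega> \<in> space M. K \<omega> = n}))"
    using FV_events K_events' by (intro suminf_emeasure [symmetric]) (auto simp: disjoint_family_on_def)
  also have "\<dots> = (\<Sum>n. ennreal (prob {\<omega> \<in> space M. K \<omega> = n} * prob {\<omega> \<in> space M. F n (V \<omega>) \<in> A}))"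
    using indep_setD [OF indep FV_sets K_events] by (simp add: emeasure_eq_measure mult.commute)
  finally show ?thesis .
qed

lemma (in prob_space) distr_random_index_eq:
  fixes K :: "'a \<Rightarrow> nat"
  assumes K: "K \<in> M \<rightarrow>\<^sub>M count_space UNIV" and V: "V \<in> M \<rightarrow>\<^sub>M PV"
    and F: "\<And>n. F n \<in> PV \<rightarrow>\<^sub>M L" and F': "\<And>n. F' n \<in> PV \<rightarrow>\<^sub>M L"
    and indep: "indep_set {V -` B \<inter> space M | B. B \<in> sets PV} E"
    and K_events: "\<And>n. {\<omega> \<in> space M. K \<omega> = n} \<in> E"
    and eq: "\<And>n. distr M L (\<lambda>\<omega>. F n (V \<omega>)) = distr M L (\<lambda>\<omega>. F' n (V \<omega>))"
  shows "distr M L (\<lambda>\<omega>. F (K \<omega>) (V \<omega>)) = distr M L (\<lambda>\<omega>. F' (K \<omega>) (V \<omega>))"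
proof (rule measure_eqI)
  fix A
  assume "A \<in> sets (distr M L (\<lambda>\<omega>. F (K \<omega>) (V \<omega>)))"
  then have A: "A \<in> sets L"
    by simp
  have "prob {\<omega> \<in> space M. F n (V \<omega>) \<in> A} = prob {\<omega> \<in> space M. F' n (V \<omega>) \<in> A}" for n
    using arg_cong [OF eq [of n], of "\<lambda>\<nu>. measure \<nu> A"] A
      measurable_compose [OF V F] measurable_compose [OF V F']
    by (simp add: measure_distr vimage_def Int_def conj_commute)
  then show "emeasure (distr M L (\<lambda>\<omega>. F (K \<omega>) (V \<omega>))) A = emeasure (distr M L (\<lambda>\<omega>. F' (K \<omega>) (V \<omega>))) A"
    using emeasure_distr_random_index [where F = F, OF K V F indep K_events A]
      emeasure_distr_random_index [where F = F', OF K V F' indep K_events A] by simp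
qed simp

lemma component_event_in_generated:
  fixes N :: "'i \<Rightarrow> 'w \<Rightarrow> 'a"
  assumes t: "t \<in> I"
  shows "{\<omega> \<in> space M. N t \<omega> = a}
    \<in> {(\<lambda>\<omega>. \<lambda>s\<in>I. N s \<omega>) -` B \<inter> space M | B. B \<in> sets (Pi\<^sub>M I (\<lambda>_. count_space UNIV))}"
proof -
  let ?B = "(\<lambda>f. f t) -` {a} \<inter> space (Pi\<^sub>M I (\<lambda>_. count_space UNIV))"
  have B: "?B \<in> sets (Pi\<^sub>M I (\<lambda>_. count_space UNIV))"
    by (rule measurable_sets [OF measurable_component_singleton [OF t]]) simp
  have "(\<lambda>\<omega>. \<lambda>s\<in>I. N s \<omega>) -` ?B \<inter> space M = {\<omega> \<in> space M. N t \<omega> = a}"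
    using t by (auto simp: space_PiM)
  with B show ?thesis
    by (intro CollectI exI [of _ ?B]) simp
qed

lemma space_borel_of: "space (borel_of T) = topspace T"
  unfolding borel_of_def by (rule space_measure_of) (auto dest: openin_subset)

locale left_compound_process = prob_space M + group G
  for M :: "'w measure" and G :: "('g, 'b) monoid_scheme" (structure) +
  fixes MG :: "'g measure" and X :: "nat \<Rightarrow> 'w \<Rightarrow> 'g" and N :: "real \<Rightarrow> 'w \<Rightarrow> nat"
  assumes space_MG: "space MG = carrier G"
    and mult_measurable: "(\<lambda>p. fst p \<otimes>\<^bsub>G\<^esub> snd p) \<in> MG \<Otimes>\<^sub>M MG \<rightarrow>\<^sub>M MG"
    and X_measurable: "\<And>n. 1 \<le> n \<Longrightarrow> X n \<in> M \<rightarrow>\<^sub>M MG"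
    and X_indep: "indep_vars (\<lambda>_. MG) X {1..}"
    and X_ident: "\<And>n. 1 \<le> n \<Longrightarrow> distr M MG (X n) = distr M MG (X 1)"
    and X_N_indep: "indep_set
        {(\<lambda>\<omega>. \<lambda>n\<in>{1..}. X n \<omega>) -` A \<inter> space M | A. A \<in> sets (Pi\<^sub>M {1..} (\<lambda>_. MG))}
        {(\<lambda>\<omega>. \<lambda>s\<in>{0..}. N s \<omega>) -` B \<inter> space M | B. B \<in> sets (Pi\<^sub>M {0..} (\<lambda>_. count_space UNIV))}"
    and X_0: "\<And>\<omega>. X 0 \<omega> = \<one>\<^bsub>G\<^esub>"
    and N_measurable: "\<And>t. 0 \<le> t \<Longrightarrow> N t \<in> M \<rightarrow>\<^sub>M count_space UNIV"
begin

lemma measurable_conjugation: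
  assumes k: "k \<in> carrier G"
  shows "(\<lambda>x. k \<otimes> x \<otimes> inv k) \<in> MG \<rightarrow>\<^sub>M MG"
proof -
  have k_space: "k \<in> space MG" "inv k \<in> space MG"
    using k space_MG by auto
  have "(\<lambda>x. k \<otimes> x) \<in> MG \<rightarrow>\<^sub>M MG"
    using measurable_compose [OF measurable_Pair [OF measurable_const [OF k_space(1)] measurable_ident]
        mult_measurable]
    by simp
  from measurable_compose [OF measurable_Pair [OF this measurable_const [OF k_space(2)]] mult_measurable]
  show ?thesis
    by simp
qed

lemma left_cpp_distr_eq:
  assumes t: "0 \<le> t"
    and h: "h \<in> MG \<rightarrow>\<^sub>M MG" "h \<one> = \<one>" "distr M MG (\<lambda>\<omega>. h (X 1 \<omega>)) = distr M MG (X 1)"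
    and \<sigma>: "\<And>n. bij_betw (\<sigma> n) {1..n} {1..n}"
    and intertwining: "\<And>n x. (\<And>i. i \<in> {1..n} \<Longrightarrow> x i \<in> carrier G) \<Longrightarrow>
      h (seq_prod G x n) = seq_prod G (\<lambda>i. h (x (\<sigma> n i))) n"
  shows "distr M MG (left_cpp G X N t) = distr M MG (\<lambda>\<omega>. h (left_cpp G X N t \<omega>))"
proof -
  let ?V = "\<lambda>\<omega>. \<lambda>n\<in>{1..}. X n \<omega>"
  let ?PV = "Pi\<^sub>M {1..} (\<lambda>_. MG)"
  have V: "?V \<in> M \<rightarrow>\<^sub>M ?PV"
    by (rule measurable_restrict) (simp add: X_measurable)
  have prod: "(\<lambda>x. seq_prod G x n) \<in> ?PV \<rightarrow>\<^sub>M MG" for n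
    using space_MG by (intro measurable_seq_prod [OF mult_measurable]) auto
  have N_events: "{\<omega> \<in> space M. N t \<omega> = n}
      \<in> {(\<lambda>\<omega>. \<lambda>s\<in>{0..}. N s \<omega>) -` B \<inter> space M | B. B \<in> sets (Pi\<^sub>M {0..} (\<lambda>_. count_space UNIV))}" for n
    using t by (intro component_event_in_generated) simp
  have law_h: "distr (distr M MG (X 1)) MG h = distr M MG (X 1)"
    using distr_distr [OF h(1) X_measurable] h(3) by (simp add: comp_def)
  have per_n: "distr M MG (\<lambda>\<omega>. seq_prod G (?V \<omega>) n) = distr M MG (\<lambda>\<omega>. h (seq_prod G (?V \<omega>) n))" for n
  proof -
    have X_n: "X i \<in> M \<rightarrow>\<^sub>M MG" "distr M MG (X i) = distr M MG (X 1)" if "i \<in> {1..n}" for i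
      using X_measurable [of i] X_ident [of i] that by auto
    have "indep_vars (\<lambda>_. MG) X {1..n}"
      by (rule indep_vars_subset [OF X_indep]) auto
    from seq_prod_distr_eq [where \<sigma> = "\<sigma> n", OF is_group space_MG mult_measurable X_n(1) this X_n(2)
        h(1) law_h h(2) \<sigma> intertwining]
    show ?thesis
      by simp
  qed
  have "distr M MG (\<lambda>\<omega>. seq_prod G (?V \<omega>) (N t \<omega>)) = distr M MG (\<lambda>\<omega>. h (seq_prod G (?V \<omega>) (N t \<omega>)))"
  proof (rule distr_random_index_eq [where K = "N t" and V = ?V and
        F = "\<lambda>n x. seq_prod G x n" and F' = "\<lambda>n x. h (seq_prod G x n)"])
    show "(\<lambda>x. h (seq_prod G x n)) \<in> ?PV \<rightarrow>\<^sub>M MG" for n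
      using prod h(1) by (rule measurable_compose)
  qed (fact N_measurable [OF t] V prod X_N_indep N_events per_n)+
  moreover have "left_cpp G X N t = (\<lambda>\<omega>. seq_prod G (?V \<omega>) (N t \<omega>))"
    by (simp add: fun_eq_iff left_cpp_def left_prod_eq_seq_prod X_0 is_group)
  ultimately show ?thesis
    by simp
qed

lemma inverse_invariant_left_cpp:
  assumes "0 \<le> t" "(\<lambda>x. inv x) \<in> MG \<rightarrow>\<^sub>M MG" "inverse_invariant G MG M (X 1)"
  shows "inverse_invariant G MG M (left_cpp G X N t)"
  unfolding inverse_invariant_def
proof (rule left_cpp_distr_eq [where \<sigma> = "\<lambda>n i. Suc n - i"])
  show "bij_betw (\<lambda>i. Suc n - i) {1..n} {1..n}" for n
    by (rule bij_betw_byWitness [where f' = "\<lambda>i. Suc n - i"]) auto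
  show "inv (seq_prod G x n) = seq_prod G (\<lambda>i. inv (x (Suc n - i))) n"
    if "\<And>i. i \<in> {1..n} \<Longrightarrow> x i \<in> carrier G" for n x
    using that by (rule inv_seq_prod)
qed (use assms in \<open>auto simp: inverse_invariant_def\<close>)

lemma conjugate_invariant_left_cpp:
  assumes "0 \<le> t" "conjugate_invariant G MG M (X 1)"
  shows "conjugate_invariant G MG M (left_cpp G X N t)"
  unfolding conjugate_invariant_def
proof
  fix k
  assume k: "k \<in> carrier G"
  show "distr M MG (left_cpp G X N t) = distr M MG (\<lambda>\<omega>. k \<otimes> left_cpp G X N t \<omega> \<otimes> inv k)"
  proof (rule left_cpp_distr_eq [where \<sigma> = "\<lambda>n i. i"])
    show "bij_betw (\<lambda>i. i) {1..n} {1..n}" for n :: nat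
      by (simp add: bij_betw_def)
    show "k \<otimes> seq_prod G x n \<otimes> inv k = seq_prod G (\<lambda>i. k \<otimes> x i \<otimes> inv k) n"
      if "\<And>i. i \<in> {1..n} \<Longrightarrow> x i \<in> carrier G" for n x
      using k that by (rule conj_seq_prod)
  qed (use assms k measurable_conjugation in \<open>auto simp: conjugate_invariant_def\<close>)
qed

end


theorem proposition4:
  fixes G :: "('g, 'b) monoid_scheme" and T :: "'g topology"
    and M :: "'w measure" and l :: "real"
    and N :: "real \<Rightarrow> 'w \<Rightarrow> nat" and X :: "nat \<Rightarrow> 'w \<Rightarrow> 'g" and t :: real
  assumes lie: "compact_connected_lie_group G T"
    and mult_meas: "(\<lambda>p. fst p \<otimes>\<^bsub>G\<^esub> snd p) \<in> borel_of T \<Otimes>\<^sub>M borel_of T \<rightarrow>\<^sub>M borel_of T"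
    and inv_meas: "(\<lambda>x. inv\<^bsub>G\<^esub> x) \<in> borel_of T \<rightarrow>\<^sub>M borel_of T"
    and P: "prob_space M"
    and l_pos: "l > 0"
    and N_poisson: "poisson_process M l N"
    and X_rv: "\<forall>n\<ge>1. X n \<in> M \<rightarrow>\<^sub>M borel_of T"
    and X_indep: "prob_space.indep_vars M (\<lambda>_. borel_of T) X {1..}"
    and X_ident: "\<forall>n\<ge>1. distr M (borel_of T) (X n) = distr M (borel_of T) (X 1)"
    and X_N_indep: "prob_space.indep_set M
        {(\<lambda>\<omega>. \<lambda>n\<in>{1..}. X n \<omega>) -` A \<inter> space M | A. A \<in> sets (Pi\<^sub>M {1..} (\<lambda>_. borel_of T))}
        {(\<lambda>\<omega>. \<lambda>s\<in>{0..}. N s \<omega>) -` B \<inter> space M | B. B \<in> sets (Pi\<^sub>M {0..} (\<lambda>_. count_space UNIV))}"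
    and X0: "\<forall>\<omega>. X 0 \<omega> = \<one>\<^bsub>G\<^esub>"
    and t_nonneg: "t \<ge> 0"
  shows "(inverse_invariant G (borel_of T) M (X 1) \<longrightarrow>
            inverse_invariant G (borel_of T) M (left_cpp G X N t))
       \<and> (conjugate_invariant G (borel_of T) M (X 1) \<longrightarrow>
            conjugate_invariant G (borel_of T) M (left_cpp G X N t))"
proof -
  have G: "group G" and carrier_T: "topspace T = carrier G"
    using lie by (auto simp: compact_connected_lie_group_def topological_group_def)
  have N_measurable: "N s \<in> M \<rightarrow>\<^sub>M count_space UNIV" if "0 \<le> s" for s
    using N_poisson that by (auto simp: poisson_process_def)
  interpret left_compound_process M G "borel_of T" X N
  proof (rule left_compound_process.intro [OF P G], unfold_locales)
    show "space (borel_of T) = carrier G"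
      by (simp add: space_borel_of carrier_T)
  qed (use mult_meas X_rv X_indep X_ident X_N_indep X0 N_measurable in blast)+
  show ?thesis
    using inverse_invariant_left_cpp [OF t_nonneg inv_meas] conjugate_invariant_left_cpp [OF t_nonneg]
    by blast
qed

end
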